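(* Let $X$ be any one of the sequences $F,L,J,j,P,Q$. Then for all integers $a,b,c,d,e,m$, $$(X_{d-a}X_{e-b}-X_{e-a}X_{d-b})X_{m-c}=(X_{d-c}X_{e-b}-X_{e-c}X_{d-b})X_{m-a}+(X_{d-a}X_{e-c}-X_{e-a}X_{d-c})X_{m-b}.$$
   Context: All sequences are indexed by $n\in\mathbb Z$. Fibonacci numbers $F_n$ and Lucas numbers $L_n$: $F_n=F_{n-1}+F_{n-2}$, $L_n=L_{n-1}+L_{n-2}$ for all $n\in\mathbb Z$, with $F_0=0,F_1=1,L_0=2,L_1=1$ (so $F_{-n}=(-1)^{n-1}F_n$, $L_{-n}=(-1)^nL_n$). Jacobsthal numbers $J_n$ and Jacobsthal–Lucas numbers $j_n$: $J_n=J_{n-1}+2J_{n-2}$, $j_n=j_{n-1}+2j_{n-2}$ for all $n\in\mathbb Z$, with $J_0=0,J_1=1,j_0=2,j_1=1$ (so $J_{-n}=(-1)^{n-1}2^{-n}J_n$, $j_{-n}=(-1)^n2^{-n}j_n$, rational for negative index). Pell numbers $P_n$ and Pell–Lucas numbers $Q_n$: $P_n=2P_{n-1}+P_{n-2}$, $Q_n=2Q_{n-1}+Q_{n-2}$ for all $n\in\mathbb Z$, with $P_0=0,P_1=1,Q_0=2,Q_1=2$ (so $P_{-n}=(-1)^{n-1}P_n$, $Q_{-n}=(-1)^nQ_n$). *)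

theory Defs
  imports Complex_Main
begin

(* Two-sided linear recurrence  x_n = p x_(n-1) + q x_(n-2)  (q <> 0), n in Z,
   with initial values x_0 = a, x_1 = b.  Values are real (Jacobsthal numbers
   with negative index are rational). *)

fun fwd :: "real \<Rightarrow> real \<Rightarrow> real \<Rightarrow> real \<Rightarrow> nat \<Rightarrow> real \<times> real" where
  "fwd p q a b 0 = (a, b)"
| "fwd p q a b (Suc k) = (let (u, v) = fwd p q a b k in (v, p * v + q * u))"

(* pairs (x_(-k), x_(-k+1)) for k >= 0, using x_(n-2) = (x_n - p x_(n-1)) / q *)
fun bwd :: "real \<Rightarrow> real \<Rightarrow> real \<Rightarrow> real \<Rightarrow> nat \<Rightarrow> real \<times> real" where
  "bwd p q a b 0 = (a, b)"
| "bwd p q a b (Suc k) = (let (u, v) = bwd p q a b k in ((v - p * u) / q, u))"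

definition linrec :: "real \<Rightarrow> real \<Rightarrow> real \<Rightarrow> real \<Rightarrow> int \<Rightarrow> real" where
  "linrec p q a b n = (if n \<ge> 0 then fst (fwd p q a b (nat n)) else fst (bwd p q a b (nat (- n))))"

definition Fib :: "int \<Rightarrow> real" where "Fib = linrec 1 1 0 1"
definition Luc :: "int \<Rightarrow> real" where "Luc = linrec 1 1 2 1"
definition Jac :: "int \<Rightarrow> real" where "Jac = linrec 1 2 0 1"
definition JacL :: "int \<Rightarrow> real" where "JacL = linrec 1 2 2 1"
definition Pell :: "int \<Rightarrow> real" where "Pell = linrec 2 1 0 1"
definition PellL :: "int \<Rightarrow> real" where "PellL = linrec 2 1 2 2"

lemma "Fib (-3) = 2 \<and> Jac (-1) = 1/2 \<and> PellL 3 = 14"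
  by (simp add: Fib_def Jac_def PellL_def linrec_def numeral_eq_Suc)

end

theory Submission
  imports Defs
begin

text \<open>Every two-sided solution of \<open>x\<^sub>n\<^sub>+\<^sub>2 = p x\<^sub>n\<^sub>+\<^sub>1 + q x\<^sub>n\<close> with \<open>q \<noteq> 0\<close>
  is determined by \<open>x\<^sub>0, x\<^sub>1\<close>, so the solutions form a plane spanned by the two fundamental
  solutions \<open>G\<close> (\<open>G\<^sub>0 = 1, G\<^sub>1 = 0\<close>) and \<open>H\<close> (\<open>H\<^sub>0 = 0, H\<^sub>1 = 1\<close>). Shifts of a solution
  are solutions, hence \<open>X\<^sub>n\<^sub>-\<^sub>k = X\<^sub>-\<^sub>k G\<^sub>n + X\<^sub>1\<^sub>-\<^sub>k H\<^sub>n\<close>: the matrix \<open>(X\<^sub>n\<^sub>-\<^sub>k)\<close> indexed by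
  \<open>k \<in> {a,b,c}\<close> and \<open>n \<in> {d,e,m}\<close> has rank at most two, so its determinant vanishes. The
  identity is the Laplace expansion of that determinant along the column \<open>m\<close>.\<close>

definition solves_linrec :: "real \<Rightarrow> real \<Rightarrow> (int \<Rightarrow> real) \<Rightarrow> bool" where
  "solves_linrec p q f \<longleftrightarrow> (\<forall>n. f (n + 2) = p * f (n + 1) + q * f n)"

lemma linrec_of_neg_nat: "linrec p q a b (- int k) = fst (bwd p q a b k)"
  by (auto simp: linrec_def)

lemma solves_linrec_linrec:
  assumes q: "q \<noteq> 0"
  shows "solves_linrec p q (linrec p q a b)"
  unfolding solves_linrec_def
proof
  fix n :: int
  have "n = int (nat n) \<or> n = -1 \<or> n = - int (nat (- n - 2)) - 2" by auto
  then consider k where "n = int k" | "n = -1" | k where "n = - int k - 2" by blast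
  then show "linrec p q a b (n + 2) = p * linrec p q a b (n + 1) + q * linrec p q a b n"
  proof cases
    case 1
    have "nat (n + 2) = Suc (Suc k)" "nat (n + 1) = Suc k" "nat n = k" using 1 by simp_all
    then show ?thesis
      using 1 by (simp add: linrec_def case_prod_beta)
  next
    case 2
    then show ?thesis using q by (simp add: linrec_def field_simps)
  next
    case 3
    have bwd_values: "linrec p q a b n = fst (bwd p q a b (Suc (Suc k)))"
      "linrec p q a b (n + 1) = fst (bwd p q a b (Suc k))"
      "linrec p q a b (n + 2) = fst (bwd p q a b k)"
      using 3 linrec_of_neg_nat[of p q a b] by (simp_all add: linrec_def nat_add_distrib del: bwd.simps)
    show ?thesis
      unfolding bwd_values using q by (simp add: case_prod_beta field_simps)
  qed
qed

lemma solves_linrec_shift: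
  "solves_linrec p q f \<Longrightarrow> solves_linrec p q (\<lambda>n. f (n + k))"
  unfolding solves_linrec_def by (metis add.commute add.left_commute)

lemma solves_linrec_lincomb:
  "solves_linrec p q g \<Longrightarrow> solves_linrec p q h \<Longrightarrow> solves_linrec p q (\<lambda>n. u * g n + v * h n)"
  unfolding solves_linrec_def by (simp add: algebra_simps)

lemma solves_linrec_unique:
  assumes q: "q \<noteq> 0" and f: "solves_linrec p q f" and g: "solves_linrec p q g"
    and "f 0 = g 0" "f 1 = g 1"
  shows "f n = g n"
proof -
  have "f n = g n \<and> f (n + 1) = g (n + 1)"
  proof (induction n rule: int_induct[where k = 0])
    case base
    then show ?case using assms by simp
  next
    case (step1 i)
    have "i + 1 + 1 = i + 2" by simp
    then show ?case
      using step1 f g unfolding solves_linrec_def by metis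
  next
    case (step2 i)
    \<comment> \<open>Running the recurrence backwards divides by \<open>q\<close>.\<close>
    have "f (i + 1) = p * f i + q * f (i - 1)" "g (i + 1) = p * g i + q * g (i - 1)"
      using f g unfolding solves_linrec_def by (metis add_diff_eq diff_add_cancel one_add_one add.assoc)+
    then have "q * f (i - 1) = q * g (i - 1)"
      using step2 by (metis add_left_cancel)
    then show ?case using q step2 by simp
  qed
  then show ?thesis by simp
qed

lemma solves_linrec_expand:
  assumes q: "q \<noteq> 0" and f: "solves_linrec p q f"
  shows "f n = f 0 * linrec p q 1 0 n + f 1 * linrec p q 0 1 n"
  by (rule solves_linrec_unique[OF q f solves_linrec_lincomb[OF solves_linrec_linrec solves_linrec_linrec]])
    (simp_all add: q linrec_def)

lemma rank_two_minor_identity: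
  fixes x :: "'i \<Rightarrow> 'j \<Rightarrow> 'a::comm_ring_1"
  assumes "\<And>i j. x i j = u i * g j + v i * h j"
  shows "(x a d * x b e - x a e * x b d) * x c m =
         (x c d * x b e - x c e * x b d) * x a m + (x a d * x c e - x a e * x c d) * x b m"
  unfolding assms by (simp add: algebra_simps)

lemma solves_linrec_minor_identity:
  assumes q: "q \<noteq> 0" and X: "solves_linrec p q X"
  shows "(X (d - a) * X (e - b) - X (e - a) * X (d - b)) * X (m - c) =
         (X (d - c) * X (e - b) - X (e - c) * X (d - b)) * X (m - a) +
         (X (d - a) * X (e - c) - X (e - a) * X (d - c)) * X (m - b)"
proof -
  have "X (n - k) = X (- k) * linrec p q 1 0 n + X (1 - k) * linrec p q 0 1 n" for n k
    using solves_linrec_expand[OF q solves_linrec_shift[OF X, of "- k"], of n] by simp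
  then show ?thesis
    by (rule rank_two_minor_identity[where x = "\<lambda>k n. X (n - k)"])
qed

theorem theorem2:
  fixes X :: "int \<Rightarrow> real" and a b c d e m :: int
  assumes "X \<in> {Fib, Luc, Jac, JacL, Pell, PellL}"
  shows "(X (d - a) * X (e - b) - X (e - a) * X (d - b)) * X (m - c) =
         (X (d - c) * X (e - b) - X (e - c) * X (d - b)) * X (m - a) +
         (X (d - a) * X (e - c) - X (e - a) * X (d - c)) * X (m - b)"
proof -
  have "\<exists>p q x0 x1. q \<noteq> 0 \<and> X = linrec p q x0 x1"
    using assms unfolding Fib_def Luc_def Jac_def JacL_def Pell_def PellL_def
    by (auto; metis one_neq_zero zero_neq_numeral)
  then obtain p q x0 x1 where q: "q \<noteq> 0" and "X = linrec p q x0 x1"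
    by blast
  then have "solves_linrec p q X"
    using solves_linrec_linrec by blast
  with q show ?thesis
    by (rule solves_linrec_minor_identity)
qed

end
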